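(* Let $f:\mathbb{R}^n\to\mathbb{R}$ be continuous with bounded lower-level sets, and let $\gamma_k>0$, $\delta_k>0$, $\gamma_k\delta_k\le c$ for all $k\ge1$ and some $c>0$. Then for every $k$ the optimal set $X_k^*$ of $\min_{x\in\mathbb{R}^n}F_k(x)$ is a nonempty compact set, and for any $\hat x\in X$, $$X_k^*\subseteq\Big\{x\in\mathbb{R}^n: f(x)\le f(\hat x)+\frac{c}{4\alpha_{\min}}\Big\}\quad\text{for all }k.$$ In particular, the sequence of sets $\{X_k^*\}$ is uniformly bounded.
   Context: Let $a_1,\dots,a_m\in\mathbb{R}^n$ be nonzero vectors and $b_1,\dots,b_m\in\mathbb{R}$; $X_i=\{x:\langle a_i,x\rangle-b_i\le0\}$, $X=\bigcap_{i=1}^mX_i$ (assumed nonempty), $\alpha_{\min}=\min_i\|a_i\|$. For $\delta>0$, nonzero $a$ and scalar $b$: $h_\delta(x;a,b)=\frac{\langle a,x\rangle-b}{\|a\|}$ if $\langle a,x\rangle-b>\delta$, $\frac{(\langle a,x\rangle-b+\delta)^2}{4\delta\|a\|}$ if $-\delta\le\langle a,x\rangle-b\le\delta$, $0$ if $\langle a,x\rangle-b<-\delta$. For each $k$, $F_k(x)=f(x)+\frac{\gamma_k}{m}\sum_{i=1}^m h_{\delta_k}(x;a_i,b_i)$, and $X_k^*$ is the set of minimizers of $F_k$ over $\mathbb{R}^n$. *)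

theory Defs
  imports "HOL-Analysis.Analysis"
begin

definition hdelta :: "real \<Rightarrow> real^'n \<Rightarrow> real \<Rightarrow> real^'n \<Rightarrow> real" where
  "hdelta \<delta> a b x =
     (let t = inner a x - b in
      if t > \<delta> then t / norm a
      else if - \<delta> \<le> t then (t + \<delta>)^2 / (4 * \<delta> * norm a)
      else 0)"

definition Fk :: "(real^'n \<Rightarrow> real) \<Rightarrow> nat \<Rightarrow> (nat \<Rightarrow> real^'n) \<Rightarrow> (nat \<Rightarrow> real)
    \<Rightarrow> real \<Rightarrow> real \<Rightarrow> real^'n \<Rightarrow> real" where
  "Fk f m a b \<gamma> \<delta> x = f x + \<gamma> / real m * (\<Sum>i=1..m. hdelta \<delta> (a i) (b i) x)"

definition argmins :: "('a \<Rightarrow> real) \<Rightarrow> 'a set" where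
  "argmins F = {x. \<forall>y. F x \<le> F y}"

end

theory Submission
  imports Defs
begin

text \<open>Since the penalties are nonnegative, \<open>f \<le> F\<^sub>k\<close>, so the sublevel sets of the continuous
  function \<open>F\<^sub>k\<close> are bounded and its minimizers form a nonempty compact set. At a feasible point
  \<open>x\<^sub>h\<close> every smoothed penalty is at most \<open>\<delta>\<^sub>k / (4 \<parallel>a\<^sub>i\<parallel>)\<close>, hence
  \<open>F\<^sub>k(x\<^sub>h) \<le> f(x\<^sub>h) + \<gamma>\<^sub>k \<delta>\<^sub>k / (4 \<alpha>\<^sub>m\<^sub>i\<^sub>n) \<le> f(x\<^sub>h) + c / (4 \<alpha>\<^sub>m\<^sub>i\<^sub>n)\<close>, and a minimizer \<open>x\<close> satisfies
  \<open>f(x) \<le> F\<^sub>k(x) \<le> F\<^sub>k(x\<^sub>h)\<close>. The resulting sublevel set of \<open>f\<close> does not depend on \<open>k\<close>.\<close>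

lemma argmins_nonempty_compact:
  fixes F :: "'a::heine_borel \<Rightarrow> real"
  assumes F_cont: "continuous_on UNIV F" and F_lev: "\<And>t. bounded {x. F x \<le> t}"
  shows "argmins F \<noteq> {}" "compact (argmins F)"
proof -
  fix x0 :: 'a
  have sublevel_compact: "compact {x. F x \<le> t}" for t
    using F_lev closed_Collect_le[OF F_cont continuous_on_const]
    by (simp add: compact_eq_bounded_closed)
  have "{x. F x \<le> F x0} \<noteq> {}" by auto
  then obtain z where z: "F z \<le> F x0" "\<And>y. F y \<le> F x0 \<Longrightarrow> F z \<le> F y"
    using continuous_attains_inf[OF sublevel_compact _ continuous_on_subset[OF F_cont]] by auto
  have z_min: "z \<in> argmins F"
    unfolding argmins_def
  proof safe
    fix y
    show "F z \<le> F y"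
      using z(1) z(2)[of y] by fastforce
  qed
  then show "argmins F \<noteq> {}" by blast
  have "argmins F = {x. F x \<le> F z}"
    using z_min unfolding argmins_def by (auto intro: order_trans)
  then show "compact (argmins F)" using sublevel_compact by simp
qed

lemma argmins_subset_sublevel:
  assumes "\<And>x. g x \<le> F x"
  shows "argmins F \<subseteq> {x. g x \<le> F y}"
  using assms unfolding argmins_def by (auto intro: order_trans)

lemma hdelta_eq_clamped:
  assumes "\<delta> > 0"
  shows "hdelta \<delta> a b x = (min (max (inner a x - b) (-\<delta>)) \<delta> + \<delta>)\<^sup>2 / (4 * \<delta> * norm a)
            + max (inner a x - b - \<delta>) 0 / norm a"
proof (cases "inner a x - b > \<delta>")
  case True
  have "(2 * \<delta>)\<^sup>2 / (4 * \<delta> * norm a) = \<delta> / norm a"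
    using assms by (simp add: power2_eq_square field_simps)
  then show ?thesis
    using True by (simp add: hdelta_def min_def max_def diff_divide_distrib)
next
  case False
  then show ?thesis using assms by (auto simp: hdelta_def Let_def min_def max_def)
qed

lemma continuous_on_hdelta:
  assumes "\<delta> > 0" "a \<noteq> 0"
  shows "continuous_on UNIV (hdelta \<delta> a b)"
  unfolding hdelta_eq_clamped[OF assms(1), abs_def]
  using assms by (intro continuous_intros) auto

lemma hdelta_nonneg:
  assumes "\<delta> > 0"
  shows "hdelta \<delta> a b x \<ge> 0"
  unfolding hdelta_eq_clamped[OF assms] using assms
  by (intro add_nonneg_nonneg divide_nonneg_nonneg) auto

lemma hdelta_le_if_feasible:
  assumes "\<delta> > 0" "inner a x - b \<le> 0"
  shows "hdelta \<delta> a b x \<le> \<delta> / (4 * norm a)"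
proof (cases "- \<delta> \<le> inner a x - b")
  case True
  have "(inner a x - b + \<delta>)\<^sup>2 / (4 * \<delta> * norm a) \<le> \<delta>\<^sup>2 / (4 * \<delta> * norm a)"
    using True assms by (intro divide_right_mono power_mono) auto
  also have "\<dots> = \<delta> / (4 * norm a)"
    using assms by (cases "a = 0") (simp_all add: power2_eq_square field_simps)
  finally show ?thesis using assms unfolding hdelta_def Let_def by auto
next
  case False
  then show ?thesis using assms unfolding hdelta_def Let_def by auto
qed

lemma Fk_ge:
  assumes "\<gamma> \<ge> 0" "\<delta> > 0"
  shows "f x \<le> Fk f m a b \<gamma> \<delta> x"
  unfolding Fk_def using assms hdelta_nonneg
  by (intro add_increasing2 mult_nonneg_nonneg sum_nonneg) auto

lemma continuous_on_Fk:
  assumes "continuous_on UNIV f" "\<delta> > 0" "\<And>i. i \<in> {1..m} \<Longrightarrow> a i \<noteq> 0"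
  shows "continuous_on UNIV (Fk f m a b \<gamma> \<delta>)"
  unfolding Fk_def[abs_def] using assms continuous_on_hdelta
  by (intro continuous_intros) auto

lemma Min_norm_pos:
  fixes a :: "nat \<Rightarrow> 'a::real_normed_vector"
  assumes "m \<ge> 1" "\<And>i. i \<in> {1..m} \<Longrightarrow> a i \<noteq> 0"
  shows "(MIN i\<in>{1..m}. norm (a i)) > 0"
  using assms by (subst Min_gr_iff) auto

lemma Fk_le_if_feasible:
  assumes m_pos: "m \<ge> 1" and a_nz: "\<And>i. i \<in> {1..m} \<Longrightarrow> a i \<noteq> 0"
    and \<gamma>: "\<gamma> \<ge> 0" and \<delta>: "\<delta> > 0"
    and feasible: "\<forall>i\<in>{1..m}. inner (a i) x - b i \<le> 0"
  shows "Fk f m a b \<gamma> \<delta> x \<le> f x + \<gamma> * \<delta> / (4 * (MIN i\<in>{1..m}. norm (a i)))"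
proof -
  define \<alpha> where "\<alpha> = (MIN i\<in>{1..m}. norm (a i))"
  have \<alpha>_pos: "\<alpha> > 0" unfolding \<alpha>_def using m_pos a_nz by (rule Min_norm_pos)
  have penalty_le: "hdelta \<delta> (a i) (b i) x \<le> \<delta> / (4 * \<alpha>)" if i: "i \<in> {1..m}" for i
  proof -
    have "\<alpha> \<le> norm (a i)" unfolding \<alpha>_def using i by (intro Min_le) auto
    have "hdelta \<delta> (a i) (b i) x \<le> \<delta> / (4 * norm (a i))"
      using feasible i by (intro hdelta_le_if_feasible[OF \<delta>]) auto
    also have "\<dots> \<le> \<delta> / (4 * \<alpha>)"
      using \<open>\<alpha> \<le> norm (a i)\<close> \<alpha>_pos \<delta> by (intro divide_left_mono mult_pos_pos) auto
    finally show ?thesis .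
  qed
  have "(\<Sum>i=1..m. hdelta \<delta> (a i) (b i) x) \<le> (\<Sum>i=1..m. \<delta> / (4 * \<alpha>))"
    using penalty_le by (rule sum_mono)
  also have "\<dots> = real m * (\<delta> / (4 * \<alpha>))" by simp
  finally have "\<gamma> / real m * (\<Sum>i=1..m. hdelta \<delta> (a i) (b i) x)
      \<le> \<gamma> / real m * (real m * (\<delta> / (4 * \<alpha>)))"
    using \<gamma> by (intro mult_left_mono) auto
  also have "\<dots> = \<gamma> * \<delta> / (4 * \<alpha>)"
    using m_pos by (simp add: field_simps)
  finally show ?thesis unfolding Fk_def \<alpha>_def by simp
qed

lemma argmins_Fk_nonempty_compact:
  assumes "continuous_on UNIV f" "\<And>t. bounded {x. f x \<le> t}"
    and "\<And>i. i \<in> {1..m} \<Longrightarrow> a i \<noteq> 0" "\<gamma> \<ge> 0" "\<delta> > 0"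
  shows "argmins (Fk f m a b \<gamma> \<delta>) \<noteq> {}" "compact (argmins (Fk f m a b \<gamma> \<delta>))"
proof -
  have "{x. Fk f m a b \<gamma> \<delta> x \<le> t} \<subseteq> {x. f x \<le> t}" for t
    using Fk_ge[OF assms(4,5)] order_trans by blast
  then have "bounded {x. Fk f m a b \<gamma> \<delta> x \<le> t}" for t
    by (rule bounded_subset[OF assms(2)])
  moreover have "continuous_on UNIV (Fk f m a b \<gamma> \<delta>)"
    using assms(1,5,3) by (rule continuous_on_Fk)
  ultimately show "argmins (Fk f m a b \<gamma> \<delta>) \<noteq> {}" "compact (argmins (Fk f m a b \<gamma> \<delta>))"
    using argmins_nonempty_compact by blast+
qed

lemma argmins_Fk_subset_sublevel:
  assumes "m \<ge> 1" "\<And>i. i \<in> {1..m} \<Longrightarrow> a i \<noteq> 0" "\<gamma> \<ge> 0" "\<delta> > 0"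
    and "\<forall>i\<in>{1..m}. inner (a i) xh - b i \<le> 0"
  shows "argmins (Fk f m a b \<gamma> \<delta>)
    \<subseteq> {x. f x \<le> f xh + \<gamma> * \<delta> / (4 * (MIN i\<in>{1..m}. norm (a i)))}"
proof -
  have "argmins (Fk f m a b \<gamma> \<delta>) \<subseteq> {x. f x \<le> Fk f m a b \<gamma> \<delta> xh}"
    using Fk_ge[OF assms(3,4)] by (rule argmins_subset_sublevel)
  also have "\<dots> \<subseteq> {x. f x \<le> f xh + \<gamma> * \<delta> / (4 * (MIN i\<in>{1..m}. norm (a i)))}"
    using Fk_le_if_feasible[OF assms, where f = f] by auto
  finally show ?thesis .
qed

theorem lemma6:
  fixes f :: "real^'n \<Rightarrow> real"
    and m :: nat
    and a :: "nat \<Rightarrow> real^'n"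
    and b :: "nat \<Rightarrow> real"
    and \<gamma> \<delta> :: "nat \<Rightarrow> real"
    and c :: real
  assumes m_pos: "m \<ge> 1"
    and a_nz: "\<And>i. i \<in> {1..m} \<Longrightarrow> a i \<noteq> 0"
    and X_ne: "{x. \<forall>i\<in>{1..m}. inner (a i) x - b i \<le> 0} \<noteq> {}"
    and f_cont: "continuous_on UNIV f"
    and f_lev: "\<And>t. bounded {x. f x \<le> t}"
    and c_pos: "c > 0"
    and \<gamma>_pos: "\<And>k. k \<ge> 1 \<Longrightarrow> \<gamma> k > 0"
    and \<delta>_pos: "\<And>k. k \<ge> 1 \<Longrightarrow> \<delta> k > 0"
    and \<gamma>\<delta>_le: "\<And>k. k \<ge> 1 \<Longrightarrow> \<gamma> k * \<delta> k \<le> c"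
  shows "(\<forall>k\<ge>1. argmins (Fk f m a b (\<gamma> k) (\<delta> k)) \<noteq> {}
                \<and> compact (argmins (Fk f m a b (\<gamma> k) (\<delta> k)))
                \<and> (\<forall>xh\<in>{x. \<forall>i\<in>{1..m}. inner (a i) x - b i \<le> 0}.
                      argmins (Fk f m a b (\<gamma> k) (\<delta> k))
                        \<subseteq> {x. f x \<le> f xh + c / (4 * (MIN i\<in>{1..m}. norm (a i)))}))
         \<and> (\<exists>B. \<forall>k\<ge>1. argmins (Fk f m a b (\<gamma> k) (\<delta> k)) \<subseteq> cball 0 B)"
proof -
  define X where "X = {x. \<forall>i\<in>{1..m}. inner (a i) x - b i \<le> 0}"
  define \<alpha> where "\<alpha> = (MIN i\<in>{1..m}. norm (a i))"
  have \<alpha>_pos: "\<alpha> > 0" unfolding \<alpha>_def using m_pos a_nz by (rule Min_norm_pos)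
  have \<gamma>: "\<gamma> k \<ge> 0" and \<delta>: "\<delta> k > 0" if "k \<ge> 1" for k
    using that \<gamma>_pos \<delta>_pos by (auto intro: less_imp_le)
  have sublevel: "argmins (Fk f m a b (\<gamma> k) (\<delta> k)) \<subseteq> {x. f x \<le> f xh + c / (4 * \<alpha>)}"
    if k: "k \<ge> 1" and xh: "xh \<in> X" for k xh
  proof -
    have feasible: "\<forall>i\<in>{1..m}. inner (a i) xh - b i \<le> 0" using xh unfolding X_def by simp
    have "argmins (Fk f m a b (\<gamma> k) (\<delta> k)) \<subseteq> {x. f x \<le> f xh + \<gamma> k * \<delta> k / (4 * \<alpha>)}"
      unfolding \<alpha>_def using m_pos a_nz \<gamma>[OF k] \<delta>[OF k] feasible by (rule argmins_Fk_subset_sublevel)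
    also have "\<dots> \<subseteq> {x. f x \<le> f xh + c / (4 * \<alpha>)}"
      using divide_right_mono[OF \<gamma>\<delta>_le[OF k], of "4 * \<alpha>"] \<alpha>_pos by auto
    finally show ?thesis .
  qed
  obtain xh where xh: "xh \<in> X" using X_ne unfolding X_def by blast
  obtain B where B: "\<forall>x\<in>{x. f x \<le> f xh + c / (4 * \<alpha>)}. norm x \<le> B"
    using f_lev unfolding bounded_iff by blast
  have "argmins (Fk f m a b (\<gamma> k) (\<delta> k)) \<subseteq> cball 0 B" if "k \<ge> 1" for k
    using sublevel[OF that xh] B by (force simp: mem_cball_0)
  moreover have "argmins (Fk f m a b (\<gamma> k) (\<delta> k)) \<noteq> {}"
    "compact (argmins (Fk f m a b (\<gamma> k) (\<delta> k)))" if "k \<ge> 1" for k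
    using argmins_Fk_nonempty_compact[where m = m and a = a, OF f_cont f_lev a_nz \<gamma>[OF that] \<delta>[OF that]]
    by blast+
  ultimately show ?thesis using sublevel unfolding X_def \<alpha>_def by blast
qed

end
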